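(* Let $n,k$ be integers with $1<k<n-1$, let $\mathcal{P}_{k,n}=\{x\in[0,1]^n:\sum_{i=1}^nx_i=k\}$, let $\mathcal{F}$ be a strong Bernoulli factory for $\mathcal{P}_{k,n}$, and let $v,v'$ be two distinct vertices of $\mathcal{P}_{k,n}$. Then for every $T\ge0$, $\nabla P_{v,T}(v')=0$.
   Context: A Bernoulli factory with output set $V$ (for inputs $x\in[0,1]^n$) is a (possibly infinite) rooted binary tree whose internal nodes are labeled by an index $i\in[n]$ or a known constant $c\in(0,1)$ and whose leaves are labeled by elements of $V$; on input $x$ one walks from the root, at a node labeled $i$ flipping a fresh independent coin that is $1$ with probability $x_i$, at a node labeled $c$ a fresh coin of bias $c$, following the edge labeled by the outcome, and outputs the label of the leaf reached; $\mathcal{F}(x)$ is the output and $T_{\mathcal{F}}(x)$ the depth of the leaf reached. For a polytope $\mathcal{P}$ with vertex set $V$, a strong Bernoulli factory for $\mathcal{P}$ is such a factory with output set $V$ that terminates almost surely and satisfies $\mathbb{E}[\mathcal{F}(x)]=x$ for all $x\in\mathcal{P}$. $P_{v,T}(x)=\Pr[\mathcal{F}(x)=v\wedge T_{\mathcal{F}}(x)\le T]$, regarded as the polynomial on $\mathbb{R}^n$ equal to the sum, over leaves labeled $v$ at depth at most $T$, of the product of the transition probabilities along the root-to-leaf path; $\nabla$ is its gradient in $\mathbb{R}^n$. *)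

theory Defs
  imports "HOL-Analysis.Analysis"
begin

text \<open>A (possibly infinite) rooted binary tree is represented by a labelling of
  all finite bool-paths from the root (True = coin outcome 1, False = outcome 0).
  Only the labels of paths all of whose proper prefixes are internal nodes matter.\<close>

datatype ('i, 'v) node = Query 'i | Const real | Leaf 'v

type_synonym ('i, 'v) tree = "bool list \<Rightarrow> ('i, 'v) node"

definition is_internal :: "('i, 'v) node \<Rightarrow> bool" where
  "is_internal a \<longleftrightarrow> (case a of Leaf _ \<Rightarrow> False | _ \<Rightarrow> True)"

definition is_node :: "('i, 'v) tree \<Rightarrow> bool list \<Rightarrow> bool" where
  "is_node t p \<longleftrightarrow> (\<forall>j < length p. is_internal (t (take j p)))"

definition leaf_at :: "('i, 'v) tree \<Rightarrow> bool list \<Rightarrow> 'v \<Rightarrow> bool" where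
  "leaf_at t p v \<longleftrightarrow> is_node t p \<and> t p = Leaf v"

definition trans_prob :: "('i, 'v) node \<Rightarrow> bool \<Rightarrow> (real ^ 'i) \<Rightarrow> real" where
  "trans_prob a b x = (case a of
      Query i \<Rightarrow> (if b then x $ i else 1 - x $ i)
    | Const c \<Rightarrow> (if b then c else 1 - c)
    | Leaf _ \<Rightarrow> 0)"

definition path_prob :: "('i, 'v) tree \<Rightarrow> bool list \<Rightarrow> (real ^ 'i) \<Rightarrow> real" where
  "path_prob t p x = (\<Prod>j<length p. trans_prob (t (take j p)) (p ! j) x)"

definition P_vT :: "('i, 'v) tree \<Rightarrow> 'v \<Rightarrow> nat \<Rightarrow> (real ^ 'i) \<Rightarrow> real" where
  "P_vT t v T x = (\<Sum>p\<in>{p. length p \<le> T \<and> leaf_at t p v}. path_prob t p x)"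

definition P_T :: "('i, 'v) tree \<Rightarrow> nat \<Rightarrow> (real ^ 'i) \<Rightarrow> real" where
  "P_T t T x = (\<Sum>p\<in>{p. length p \<le> T \<and> (\<exists>v. leaf_at t p v)}. path_prob t p x)"

definition bernoulli_factory :: "('i::finite, 'v) tree \<Rightarrow> 'v set \<Rightarrow> bool" where
  "bernoulli_factory t V \<longleftrightarrow>
     (\<forall>p c. is_node t p \<and> t p = Const c \<longrightarrow> 0 < c \<and> c < 1) \<and>
     (\<forall>p v. leaf_at t p v \<longrightarrow> v \<in> V)"

definition vertices :: "('a::real_vector) set \<Rightarrow> 'a set" where
  "vertices S = {v. v extreme_point_of S}"

text \<open>Strong Bernoulli factory for the polytope S: output set = vertex set of S,
  almost-sure termination and E[F(x)] = x for all x in S, where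
  Pr[F(x) = v] = lim_T P_{v,T}(x).\<close>
definition strong_bernoulli_factory :: "('i::finite, real ^ 'i) tree \<Rightarrow> (real ^ 'i) set \<Rightarrow> bool" where
  "strong_bernoulli_factory t S \<longleftrightarrow>
     bernoulli_factory t (vertices S) \<and>
     (\<forall>x\<in>S. (\<lambda>T. P_T t T x) \<longlonglongrightarrow> 1) \<and>
     (\<forall>x\<in>S. (\<Sum>v\<in>vertices S. lim (\<lambda>T. P_vT t v T x) *\<^sub>R v) = x)"

definition P_kn :: "nat \<Rightarrow> (real ^ 'n::finite) set" where
  "P_kn k = {x. (\<forall>i. 0 \<le> x $ i \<and> x $ i \<le> 1) \<and> (\<Sum>i\<in>UNIV. x $ i) = real k}"

end

theory Submission
  imports Defs
begin

(*
  Write f = P_{v,T}; it is a polynomial, so it has a derivative D at v'. Since f(x) is at most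
  Pr[F(x) = v] and E[F(x)] = x, on P_{k,n} we get f(x) <= x_i where v_i = 1 and f(x) <= 1 - x_i
  where v_i = 0: f vanishes wherever some 0/1 coordinate of x is opposite to that of v, in
  particular at v'. As f >= 0 on the cube, D e_l >= 0 if v'_l = 0 and D e_l <= 0 if v'_l = 1.
  Along an edge direction e_a - e_b of the polytope (v'_a = 0, v'_b = 1), f stays 0 as long as a
  coordinate where v and v' disagree lies outside {a, b}, whence D e_a = D e_b. Because
  1 < k < n - 1, every l has such a partner with the opposite sign constraint, so D e_l = 0.
*)

lemma differentiable_prod:
  fixes f :: "'i \<Rightarrow> 'a::real_normed_vector \<Rightarrow> 'b::real_normed_field"
  shows "(\<And>i. i \<in> I \<Longrightarrow> f i differentiable (at x within S)) \<Longrightarrow>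
    (\<lambda>x. \<Prod>i\<in>I. f i x) differentiable (at x within S)"
  by (induction I rule: infinite_finite_induct) auto

lemma trans_prob_differentiable: "(\<lambda>x. trans_prob a b x) differentiable (at y)"
proof (cases a)
  case (Query i)
  have "(\<lambda>x. x $ i) differentiable (at y)"
    by (rule bounded_linear_imp_differentiable) (rule bounded_linear_vec_nth)
  then show ?thesis using Query by (cases b) (auto simp: trans_prob_def)
qed (auto simp: trans_prob_def)

lemma finite_paths_length_le: "finite {p::bool list. length p \<le> T \<and> Q p}"
  by (rule rev_finite_subset[OF finite_lists_length_le[of UNIV T]]) auto

lemma P_vT_differentiable: "P_vT t v T differentiable (at y)"
  unfolding P_vT_def path_prob_def
  by (intro differentiable_sum ballI differentiable_prod trans_prob_differentiable
      finite_paths_length_le)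

lemma has_derivative_nonneg_if_min_along_ray:
  fixes f :: "'a::real_normed_vector \<Rightarrow> real"
  assumes f: "(f has_derivative D) (at x)" and "0 < \<delta>"
    and min: "\<And>s. 0 < s \<Longrightarrow> s \<le> \<delta> \<Longrightarrow> f x \<le> f (x + s *\<^sub>R d)"
  shows "0 \<le> D d"
proof -
  have "((f \<circ> (\<lambda>s. x + s *\<^sub>R d)) has_derivative (D \<circ> (\<lambda>s. s *\<^sub>R d))) (at 0)"
    by (rule diff_chain_at) (auto intro!: derivative_eq_intros simp: f)
  then have "((\<lambda>s. f (x + s *\<^sub>R d)) has_real_derivative D d) (at 0)"
    using linear_scale[OF has_derivative_linear[OF f]]
    by (simp add: has_field_derivative_def o_def mult_commute_abs)
  then have "((\<lambda>s. (f (x + s *\<^sub>R d) - f x) / s) \<longlongrightarrow> D d) (at_right 0)"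
    by (auto simp: has_field_derivative_iff intro: tendsto_mono[OF at_le])
  moreover have "eventually (\<lambda>s. 0 \<le> (f (x + s *\<^sub>R d) - f x) / s) (at_right 0)"
    unfolding eventually_at_right_field using \<open>0 < \<delta>\<close> min by (intro exI[of _ \<delta>]) auto
  ultimately show ?thesis by (rule tendsto_lowerbound) simp
qed

lemma has_derivative_eq_0_if_const_along_ray:
  fixes f :: "'a::real_normed_vector \<Rightarrow> real"
  assumes f: "(f has_derivative D) (at x)" and "0 < \<delta>"
    and const: "\<And>s. 0 < s \<Longrightarrow> s \<le> \<delta> \<Longrightarrow> f (x + s *\<^sub>R d) = f x"
  shows "D d = 0"
  using has_derivative_nonneg_if_min_along_ray[OF f \<open>0 < \<delta>\<close>, of d]
    has_derivative_nonneg_if_min_along_ray[OF has_derivative_minus[OF f] \<open>0 < \<delta>\<close>, of d]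
  by (simp add: const)

lemma is_node_take: "is_node t p \<Longrightarrow> j \<le> length p \<Longrightarrow> is_node t (take j p)"
  unfolding is_node_def by (auto simp: min_def)

lemma trans_prob_nonneg:
  assumes "bernoulli_factory t V" "is_node t p" "\<forall>i. 0 \<le> x $ i \<and> x $ i \<le> 1"
  shows "0 \<le> trans_prob (t p) b x"
proof (cases "t p")
  case (Const c)
  then have "0 < c \<and> c < 1" using assms(1,2) unfolding bernoulli_factory_def by blast
  then show ?thesis using Const by (simp add: trans_prob_def)
qed (use assms(3) in \<open>auto simp: trans_prob_def\<close>)

lemma path_prob_nonneg:
  assumes "bernoulli_factory t V" "is_node t p" "\<forall>i. 0 \<le> x $ i \<and> x $ i \<le> 1"
  shows "0 \<le> path_prob t p x"
  unfolding path_prob_def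
  by (rule prod_nonneg) (meson assms trans_prob_nonneg is_node_take less_imp_le lessThan_iff)

lemma P_vT_nonneg:
  assumes "bernoulli_factory t V" "\<forall>i. 0 \<le> x $ i \<and> x $ i \<le> 1"
  shows "0 \<le> P_vT t v T x"
  unfolding P_vT_def by (rule sum_nonneg) (use assms path_prob_nonneg in \<open>auto simp: leaf_at_def\<close>)

lemma P_vT_mono:
  assumes "bernoulli_factory t V" "\<forall>i. 0 \<le> x $ i \<and> x $ i \<le> 1" "T \<le> T'"
  shows "P_vT t v T x \<le> P_vT t v T' x"
  unfolding P_vT_def
  by (rule sum_mono2[OF finite_paths_length_le])
    (use assms path_prob_nonneg in \<open>auto simp: leaf_at_def\<close>)

lemma P_T_mono:
  assumes "bernoulli_factory t V" "\<forall>i. 0 \<le> x $ i \<and> x $ i \<le> 1" "T \<le> T'"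
  shows "P_T t T x \<le> P_T t T' x"
  unfolding P_T_def
  by (rule sum_mono2[OF finite_paths_length_le])
    (use assms path_prob_nonneg in \<open>auto simp: leaf_at_def\<close>)

lemma P_vT_le_P_T:
  assumes "bernoulli_factory t V" "\<forall>i. 0 \<le> x $ i \<and> x $ i \<le> 1"
  shows "P_vT t v T x \<le> P_T t T x"
  unfolding P_vT_def P_T_def
  by (rule sum_mono2[OF finite_paths_length_le])
    (use assms path_prob_nonneg in \<open>auto simp: leaf_at_def\<close>)

lemma P_vT_le_lim:
  assumes bf: "bernoulli_factory t V" and x: "\<forall>i. 0 \<le> x $ i \<and> x $ i \<le> 1"
    and terminates: "(\<lambda>T. P_T t T x) \<longlonglongrightarrow> 1"
  shows "P_vT t v T x \<le> lim (\<lambda>T. P_vT t v T x)"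
proof -
  have inc: "incseq (\<lambda>T. P_vT t v T x)"
    using P_vT_mono[OF bf x] by (simp add: incseq_def)
  have "P_T t T x \<le> 1" for T
    using P_T_mono[OF bf x] by (intro incseq_le[OF _ terminates]) (simp add: incseq_def)
  then have "\<bar>P_vT t v T x\<bar> \<le> 1" for T
    using P_vT_nonneg[OF bf x] P_vT_le_P_T[OF bf x] by (metis abs_of_nonneg order_trans)
  then have "Bseq (\<lambda>T. P_vT t v T x)" by (intro BseqI'[of _ 1]) simp
  then have "(\<lambda>T. P_vT t v T x) \<longlonglongrightarrow> lim (\<lambda>T. P_vT t v T x)"
    using inc Bseq_monoseq_convergent incseq_imp_monoseq convergent_LIMSEQ_iff by blast
  with inc show ?thesis by (rule incseq_le)
qed

lemma convex_combination_sum_weights: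
  fixes x :: "real ^ 'n::finite"
  assumes "x = (\<Sum>w\<in>V. q w *\<^sub>R w)" and "\<And>w. w \<in> V \<Longrightarrow> (\<Sum>l\<in>UNIV. w $ l) = c"
    and "(\<Sum>l\<in>UNIV. x $ l) = c" and "c \<noteq> 0"
  shows "sum q V = 1"
proof -
  have "c = (\<Sum>l\<in>UNIV. \<Sum>w\<in>V. q w * w $ l)" using assms(1,3) by simp
  also have "\<dots> = (\<Sum>w\<in>V. q w * (\<Sum>l\<in>UNIV. w $ l))"
    by (subst sum.swap) (simp add: sum_distrib_left)
  also have "\<dots> = sum q V * c" by (simp add: assms(2) sum_distrib_right)
  finally show ?thesis using \<open>c \<noteq> 0\<close> by simp
qed

lemma convex_combination_coordinate_bounds:
  fixes x :: "real ^ 'n::finite"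
  assumes "x = (\<Sum>w\<in>V. q w *\<^sub>R w)" and "finite V" and "v \<in> V" and "sum q V = 1"
    and "\<And>w. w \<in> V \<Longrightarrow> 0 \<le> q w" and "\<And>w. w \<in> V \<Longrightarrow> 0 \<le> w $ i \<and> w $ i \<le> 1"
  shows "q v * v $ i \<le> x $ i" and "q v * (1 - v $ i) \<le> 1 - x $ i"
proof -
  have "x $ i = (\<Sum>w\<in>V. q w * w $ i)" using assms(1) by simp
  moreover have "q v * v $ i \<le> (\<Sum>w\<in>V. q w * w $ i)"
    using assms(2-6) by (intro member_le_sum) auto
  ultimately show "q v * v $ i \<le> x $ i" by simp
  have "1 - x $ i = (\<Sum>w\<in>V. q w * (1 - w $ i))"
    using assms(1,4) by (simp add: algebra_simps sum_subtractf)
  moreover have "q v * (1 - v $ i) \<le> (\<Sum>w\<in>V. q w * (1 - w $ i))"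
    using assms(2-6) by (intro member_le_sum) auto
  ultimately show "q v * (1 - v $ i) \<le> 1 - x $ i" by simp
qed

lemma exchange_in_P_kn:
  fixes w :: "real ^ 'n::finite"
  assumes "w \<in> P_kn k" and "a \<noteq> b"
    and "0 \<le> w $ a + s" "w $ a + s \<le> 1" "0 \<le> w $ b - s" "w $ b - s \<le> 1"
  shows "w + s *\<^sub>R (axis a 1 - axis b 1) \<in> P_kn k"
proof -
  have coord: "(w + s *\<^sub>R (axis a 1 - axis b 1)) $ l =
      (if l = a then w $ a + s else if l = b then w $ b - s else w $ l)" for l
    using \<open>a \<noteq> b\<close> by (simp add: axis_def)
  have "(\<Sum>l\<in>UNIV. (axis a 1 - axis b 1) $ l) = (0::real)"
    by (simp add: axis_def sum_subtractf)
  then have "(\<Sum>l\<in>UNIV. (w + s *\<^sub>R (axis a 1 - axis b 1)) $ l) = (\<Sum>l\<in>UNIV. w $ l)"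
    by (simp add: sum.distrib sum_distrib_left[symmetric])
  moreover have "0 \<le> (w + s *\<^sub>R (axis a 1 - axis b 1)) $ l \<and> (w + s *\<^sub>R (axis a 1 - axis b 1)) $ l \<le> 1" for l
    using assms unfolding coord P_kn_def by auto
  ultimately show ?thesis using assms(1) unfolding P_kn_def by auto
qed

lemma exists_other_non_integer_coordinate:
  fixes x :: "real ^ 'n::finite"
  assumes "(\<Sum>l\<in>UNIV. x $ l) \<in> \<int>" and "x $ i \<notin> \<int>"
  shows "\<exists>j. j \<noteq> i \<and> x $ j \<notin> \<int>"
proof (rule ccontr)
  assume "\<not> ?thesis"
  then have "(\<Sum>l\<in>UNIV - {i}. x $ l) \<in> \<int>" by auto
  moreover have "x $ i = (\<Sum>l\<in>UNIV. x $ l) - (\<Sum>l\<in>UNIV - {i}. x $ l)"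
    using sum.remove[of UNIV i "\<lambda>l. x $ l"] by simp
  ultimately show False using assms by (metis Ints_diff)
qed

lemma vertex_P_kn_01:
  fixes v :: "real ^ 'n::finite"
  assumes "v \<in> vertices (P_kn k)"
  shows "v $ i = 0 \<or> v $ i = 1"
proof (rule ccontr)
  assume not_01: "\<not> (v $ i = 0 \<or> v $ i = 1)"
  have v: "v extreme_point_of P_kn k" using assms unfolding vertices_def by simp
  then have box: "\<forall>l. 0 \<le> v $ l \<and> v $ l \<le> 1" and "(\<Sum>l\<in>UNIV. v $ l) \<in> \<int>"
    unfolding extreme_point_of_def P_kn_def by auto
  have fractional: "0 < v $ l \<and> v $ l < 1 \<longleftrightarrow> v $ l \<notin> \<int>" for l
    using box[rule_format, of l] by (auto simp: less_le elim: Ints_cases)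
  have "v $ i \<notin> \<int>" using not_01 box fractional by (auto simp: less_le)
  then obtain j where "j \<noteq> i" "v $ j \<notin> \<int>"
    using exists_other_non_integer_coordinate \<open>(\<Sum>l\<in>UNIV. v $ l) \<in> \<int>\<close> by blast
  define e where "e = min (min (v $ i) (1 - v $ i)) (min (v $ j) (1 - v $ j))"
  have "0 < e" "e \<le> v $ i" "e \<le> 1 - v $ i" "e \<le> v $ j" "e \<le> 1 - v $ j"
    using \<open>v $ i \<notin> \<int>\<close> \<open>v $ j \<notin> \<int>\<close> fractional by (auto simp: e_def)
  define d :: "real ^ 'n" where "d = axis i 1 - axis j 1"
  have in_P: "v + s *\<^sub>R d \<in> P_kn k" if "s = e \<or> s = - e" for s
    using that \<open>j \<noteq> i\<close> v \<open>0 < e\<close> \<open>e \<le> v $ i\<close> \<open>e \<le> 1 - v $ i\<close> \<open>e \<le> v $ j\<close> \<open>e \<le> 1 - v $ j\<close>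
    unfolding d_def extreme_point_of_def by (intro exchange_in_P_kn) auto
  have "v + e *\<^sub>R d \<noteq> v + (- e) *\<^sub>R d"
    using \<open>0 < e\<close> \<open>j \<noteq> i\<close> by (auto simp: d_def vec_eq_iff axis_def)
  moreover have "midpoint (v + e *\<^sub>R d) (v + (- e) *\<^sub>R d) = v"
    by (simp add: midpoint_def vec_eq_iff)
  ultimately have "v \<in> open_segment (v + e *\<^sub>R d) (v + (- e) *\<^sub>R d)"
    using midpoint_in_open_segment by metis
  with v in_P show False unfolding extreme_point_of_def by blast
qed

lemma mem_vertices_imp_mem: "v \<in> vertices S \<Longrightarrow> v \<in> S"
  unfolding vertices_def extreme_point_of_def by simp

lemma finite_vertices_P_kn: "finite (vertices (P_kn k :: (real ^ 'n::finite) set))"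
proof (rule finite_subset)
  show "vertices (P_kn k) \<subseteq> range (\<lambda>A. \<chi> i. if i \<in> A then 1 else 0 :: real ^ 'n)"
  proof
    fix v :: "real ^ 'n" assume "v \<in> vertices (P_kn k)"
    then have "v = (\<chi> i. if i \<in> {i. v $ i = 1} then 1 else 0)"
      using vertex_P_kn_01 by (fastforce simp: vec_eq_iff)
    then show "v \<in> range (\<lambda>A. \<chi> i. if i \<in> A then 1 else 0)" by blast
  qed
qed simp

lemma card_ones_vertex_P_kn:
  fixes v :: "real ^ 'n::finite"
  assumes "v \<in> vertices (P_kn k)"
  shows "card {l. v $ l = 1} = k"
proof -
  have "real k = (\<Sum>l\<in>UNIV. v $ l)"
    using mem_vertices_imp_mem[OF assms] unfolding P_kn_def by simp
  also have "\<dots> = (\<Sum>l\<in>UNIV. of_bool (v $ l = 1))"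
    using vertex_P_kn_01[OF assms] by (intro sum.cong) (auto simp: of_bool_def)
  finally show ?thesis by simp
qed

lemma vertex_P_kn_other_one:
  fixes v :: "real ^ 'n::finite"
  assumes "v \<in> vertices (P_kn k)" and "1 < k"
  obtains b where "b \<noteq> j" "v $ b = 1"
proof -
  have "\<not> {l. v $ l = 1} \<subseteq> {j}"
    using card_mono[of "{j}" "{l. v $ l = 1}"] card_ones_vertex_P_kn[OF assms(1)] \<open>1 < k\<close> by auto
  then show ?thesis using that by blast
qed

lemma vertex_P_kn_other_zero:
  fixes v :: "real ^ 'n::finite"
  assumes "v \<in> vertices (P_kn k)" and "k + 1 < CARD('n)"
  obtains a where "a \<noteq> i" "v $ a = 0"
proof -
  have "{l. v $ l = 0} = UNIV - {l. v $ l = 1}" using vertex_P_kn_01[OF assms(1)] by force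
  then have "card {l. v $ l = 0} = CARD('n) - k"
    by (simp add: card_Diff_subset card_ones_vertex_P_kn[OF assms(1)])
  then have "\<not> {l. v $ l = 0} \<subseteq> {i}"
    using card_mono[of "{i}" "{l. v $ l = 0}"] \<open>k + 1 < CARD('n)\<close> by auto
  then show ?thesis using that by blast
qed

lemma vertices_P_kn_differ:
  fixes v w :: "real ^ 'n::finite"
  assumes "v \<in> vertices (P_kn k)" "w \<in> vertices (P_kn k)" "v \<noteq> w"
  obtains i where "v $ i = 1" "w $ i = 0"
proof (rule ccontr)
  assume "\<not> thesis"
  then have le: "v $ l \<le> w $ l" for l
    using that vertex_P_kn_01[OF assms(1)] vertex_P_kn_01[OF assms(2)] by (metis order.refl zero_le_one)
  have "(\<Sum>l\<in>UNIV. w $ l - v $ l) = 0"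
    using assms(1,2)[THEN mem_vertices_imp_mem] unfolding P_kn_def by (simp add: sum_subtractf)
  then have "w $ l - v $ l = 0" for l
    using le by (subst (asm) sum_nonneg_eq_0_iff) auto
  then show False using \<open>v \<noteq> w\<close> by (simp add: vec_eq_iff)
qed

lemma P_vT_coordinate_bounds:
  fixes t :: "('n::finite, real ^ 'n) tree"
  assumes "0 < k" and sbf: "strong_bernoulli_factory t (P_kn k)"
    and x: "x \<in> P_kn k" and v: "v \<in> vertices (P_kn k)"
  shows "P_vT t v T x * v $ i \<le> x $ i" and "P_vT t v T x * (1 - v $ i) \<le> 1 - x $ i"
proof -
  let ?V = "vertices (P_kn k :: (real ^ 'n) set)"
  define q where "q w = lim (\<lambda>T. P_vT t w T x)" for w
  have bf: "bernoulli_factory t ?V" and terminates: "(\<lambda>T. P_T t T x) \<longlonglongrightarrow> 1"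
    and mean: "x = (\<Sum>w\<in>?V. q w *\<^sub>R w)"
    using sbf x unfolding strong_bernoulli_factory_def q_def by auto
  have box: "\<forall>i. 0 \<le> x $ i \<and> x $ i \<le> 1" using x unfolding P_kn_def by simp
  have P_le_q: "P_vT t w T x \<le> q w" for w T
    unfolding q_def using P_vT_le_lim[OF bf box terminates] .
  have q_nonneg: "0 \<le> q w" for w
    using P_vT_nonneg[OF bf box] P_le_q order_trans by blast
  have "sum q ?V = 1"
    using mean x mem_vertices_imp_mem \<open>0 < k\<close> unfolding P_kn_def
    by (intro convex_combination_sum_weights[where c = "real k"]) auto
  moreover have "0 \<le> w $ i \<and> w $ i \<le> 1" if "w \<in> ?V" for w
    using mem_vertices_imp_mem[OF that] unfolding P_kn_def by simp
  ultimately have "q v * v $ i \<le> x $ i" "q v * (1 - v $ i) \<le> 1 - x $ i"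
    using convex_combination_coordinate_bounds[OF mean finite_vertices_P_kn v] q_nonneg by auto
  moreover have "P_vT t v T x * v $ i \<le> q v * v $ i"
    "P_vT t v T x * (1 - v $ i) \<le> q v * (1 - v $ i)"
    using P_le_q[of v T] vertex_P_kn_01[OF v, of i] by (auto intro: mult_right_mono)
  ultimately show "P_vT t v T x * v $ i \<le> x $ i" "P_vT t v T x * (1 - v $ i) \<le> 1 - x $ i"
    by linarith+
qed

lemma P_vT_eq_0_if_opposite_coordinate:
  fixes t :: "('n::finite, real ^ 'n) tree"
  assumes "0 < k" and sbf: "strong_bernoulli_factory t (P_kn k)"
    and x: "x \<in> P_kn k" and v: "v \<in> vertices (P_kn k)" and "x $ i = 1 - v $ i"
  shows "P_vT t v T x = 0"
proof -
  have "bernoulli_factory t (vertices (P_kn k))" "\<forall>i. 0 \<le> x $ i \<and> x $ i \<le> 1"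
    using sbf x unfolding strong_bernoulli_factory_def P_kn_def by auto
  then have "0 \<le> P_vT t v T x" by (rule P_vT_nonneg)
  moreover have "P_vT t v T x \<le> 0"
    using P_vT_coordinate_bounds[OF assms(1-4), of T i] vertex_P_kn_01[OF v, of i] \<open>x $ i = 1 - v $ i\<close>
    by auto
  ultimately show ?thesis by simp
qed

lemma has_derivative_axis_sign_at_cube_min:
  fixes f :: "real ^ 'n::finite \<Rightarrow> real"
  assumes D: "(f has_derivative D) (at x)" and x: "\<forall>i. 0 \<le> x $ i \<and> x $ i \<le> 1"
    and min: "\<And>y. \<forall>i. 0 \<le> y $ i \<and> y $ i \<le> 1 \<Longrightarrow> f x \<le> f y"
  shows "x $ a = 0 \<Longrightarrow> 0 \<le> D (axis a 1)" and "x $ a = 1 \<Longrightarrow> D (axis a 1) \<le> 0"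
proof -
  have coord: "(x + s *\<^sub>R u *\<^sub>R axis a 1) $ i = (if i = a then x $ a + s * u else x $ i)" for s u i
    by (simp add: axis_def)
  show "0 \<le> D (axis a 1)" if "x $ a = 0"
    using x that by (intro has_derivative_nonneg_if_min_along_ray[OF D zero_less_one] min)
      (simp add: coord[of _ 1, simplified])
  show "D (axis a 1) \<le> 0" if "x $ a = 1"
  proof -
    have "0 \<le> D (- axis a 1)"
      using x that by (intro has_derivative_nonneg_if_min_along_ray[OF D zero_less_one] min)
        (simp add: coord[of _ "- 1", simplified])
    then show ?thesis using linear_neg[OF has_derivative_linear[OF D]] by simp
  qed
qed

lemma P_vT_derivative_axis_sign:
  fixes t :: "('n::finite, real ^ 'n) tree"
  assumes "0 < k" and sbf: "strong_bernoulli_factory t (P_kn k)"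
    and v: "v \<in> vertices (P_kn k)" and v': "v' \<in> vertices (P_kn k)" and "v \<noteq> v'"
    and D: "(P_vT t v T has_derivative D) (at v')"
  shows "v' $ a = 0 \<Longrightarrow> 0 \<le> D (axis a 1)" and "v' $ a = 1 \<Longrightarrow> D (axis a 1) \<le> 0"
proof -
  obtain c where "v $ c = 1" "v' $ c = 0" using vertices_P_kn_differ[OF v v' \<open>v \<noteq> v'\<close>] .
  then have "P_vT t v T v' = 0"
    using mem_vertices_imp_mem[OF v'] by (intro P_vT_eq_0_if_opposite_coordinate[OF \<open>0 < k\<close> sbf _ v, where i = c]) auto
  moreover have "bernoulli_factory t (vertices (P_kn k))"
    using sbf unfolding strong_bernoulli_factory_def by simp
  ultimately have "P_vT t v T v' \<le> P_vT t v T y" if "\<forall>i. 0 \<le> y $ i \<and> y $ i \<le> 1" for y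
    using P_vT_nonneg that by metis
  moreover have "\<forall>i. 0 \<le> v' $ i \<and> v' $ i \<le> 1"
    using mem_vertices_imp_mem[OF v'] unfolding P_kn_def by simp
  ultimately show "v' $ a = 0 \<Longrightarrow> 0 \<le> D (axis a 1)" and "v' $ a = 1 \<Longrightarrow> D (axis a 1) \<le> 0"
    using has_derivative_axis_sign_at_cube_min[OF D] by blast+
qed

lemma P_vT_derivative_exchange:
  fixes t :: "('n::finite, real ^ 'n) tree"
  assumes "0 < k" and sbf: "strong_bernoulli_factory t (P_kn k)"
    and v: "v \<in> vertices (P_kn k)" and v': "v' \<in> vertices (P_kn k)"
    and D: "(P_vT t v T has_derivative D) (at v')"
    and "v' $ a = 0" "v' $ b = 1" and "c \<noteq> a" "c \<noteq> b" and "v' $ c = 1 - v $ c"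
  shows "D (axis a 1) = D (axis b 1)"
proof -
  have vanish: "P_vT t v T x = 0" if "x \<in> P_kn k" "x $ c = 1 - v $ c" for x
    using P_vT_eq_0_if_opposite_coordinate[OF \<open>0 < k\<close> sbf that(1) v that(2)] .
  have "D (axis a 1 - axis b 1) = 0"
  proof (rule has_derivative_eq_0_if_const_along_ray[OF D zero_less_one])
    fix s :: real assume "0 < s" "s \<le> 1"
    let ?x = "v' + s *\<^sub>R (axis a 1 - axis b 1)"
    have "?x \<in> P_kn k"
      using mem_vertices_imp_mem[OF v'] assms(6,7) \<open>0 < s\<close> \<open>s \<le> 1\<close> by (intro exchange_in_P_kn) auto
    moreover have "?x $ c = 1 - v $ c" using assms(8-10) by (simp add: axis_def)
    ultimately show "P_vT t v T ?x = P_vT t v T v'"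
      using vanish mem_vertices_imp_mem[OF v'] assms(10) by simp
  qed
  then show ?thesis using linear_diff[OF has_derivative_linear[OF D]] by simp
qed

lemma P_vT_derivative_axis_eq_0:
  fixes t :: "('n::finite, real ^ 'n) tree"
  assumes "1 < k" and "k + 1 < CARD('n)" and sbf: "strong_bernoulli_factory t (P_kn k)"
    and v: "v \<in> vertices (P_kn k)" and v': "v' \<in> vertices (P_kn k)" and "v \<noteq> v'"
    and D: "(P_vT t v T has_derivative D) (at v')"
  shows "D (axis l 1) = 0"
proof -
  have "0 < k" using \<open>1 < k\<close> by simp
  note sign = P_vT_derivative_axis_sign[OF \<open>0 < k\<close> sbf v v' \<open>v \<noteq> v'\<close> D]
  note exchange = P_vT_derivative_exchange[OF \<open>0 < k\<close> sbf v v' D]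
  show ?thesis
  proof (cases "v' $ l = 0")
    case True
    obtain c where "v $ c = 0" "v' $ c = 1" using vertices_P_kn_differ[OF v' v] \<open>v \<noteq> v'\<close> by metis
    obtain b where "b \<noteq> c" "v' $ b = 1" using vertex_P_kn_other_one[OF v' \<open>1 < k\<close>] .
    then have "D (axis l 1) = D (axis b 1)"
      using True \<open>v $ c = 0\<close> \<open>v' $ c = 1\<close> by (intro exchange[of l b c]) auto
    then show ?thesis using sign[of l] sign[of b] True \<open>v' $ b = 1\<close> by simp
  next
    case False
    then have "v' $ l = 1" using vertex_P_kn_01[OF v'] by blast
    obtain c where "v $ c = 1" "v' $ c = 0" using vertices_P_kn_differ[OF v v' \<open>v \<noteq> v'\<close>] .
    obtain a where "a \<noteq> c" "v' $ a = 0" using vertex_P_kn_other_zero[OF v' \<open>k + 1 < CARD('n)\<close>] .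
    then have "D (axis a 1) = D (axis l 1)"
      using \<open>v' $ l = 1\<close> \<open>v $ c = 1\<close> \<open>v' $ c = 0\<close> by (intro exchange[of a l c]) auto
    then show ?thesis using sign[of l] sign[of a] \<open>v' $ l = 1\<close> \<open>v' $ a = 0\<close> by simp
  qed
qed

theorem lemma7p5:
  fixes t :: "('n::finite, real ^ 'n) tree"
    and k :: nat and v v' :: "real ^ 'n" and T :: nat
  assumes "1 < k" and "k + 1 < CARD('n)"
    and "strong_bernoulli_factory t (P_kn k)"
    and "v \<in> vertices (P_kn k :: (real ^ 'n) set)"
    and "v' \<in> vertices (P_kn k :: (real ^ 'n) set)"
    and "v \<noteq> v'"
  shows "(P_vT t v T has_derivative (\<lambda>h. 0)) (at v')"
proof -
  obtain D where D: "(P_vT t v T has_derivative D) (at v')"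
    using P_vT_differentiable[of t v T v'] unfolding differentiable_def by blast
  have "D b = 0" if "b \<in> Basis" for b
    using that P_vT_derivative_axis_eq_0[OF assms D] by (auto simp: Basis_vec_def)
  then have "D = (\<lambda>h. 0)"
    by (intro linear_eq_stdbasis has_derivative_linear[OF D] linear_zero)
  with D show ?thesis by simp
qed

end
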